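(* Let $G=(V,E)$ be a locally finite, connected, infinite graph. Then $p_{\mathrm{cut,E}}\le p_{\mathrm{cut,V}}$. If moreover $G$ has bounded degree, then $p_{\mathrm{cut,E}}=p_{\mathrm{cut,V}}$.
   Context: Fix a vertex $x$ (the thresholds do not depend on $x$). Consider Bernoulli$(p)$ bond percolation on $G$ (each edge open independently with probability $p$), with law $\mathbb{P}_p$, expectation $\mathbb{E}_p$, and open cluster $C(x)$ of $x$. A vertex cutset separating $x$ from infinity is a set $\Pi_V\subset V$ such that the connected component of $x$ in $G$ with the vertices of $\Pi_V$ deleted is finite; an edge cutset is a set $\Pi_E\subset E$ such that the component of $x$ in $G$ with the edges of $\Pi_E$ deleted is finite. Define $p_{\mathrm{cut,E}}=\sup\{p\ge0:\inf_{\Pi_E}\mathbb{E}_p[|C(x)\cap\Pi_E|]=0\}$, where $C(x)\cap\Pi_E$ is the set of edges of $C(x)$ lying in $\Pi_E$ and the infimum is over all edge cutsets separating $x$ from infinity, and $p_{\mathrm{cut,V}}=\sup\{p\ge0:\inf_{\Pi_V}\mathbb{E}_p[|C(x)\cap\Pi_V|]=0\}$, where $C(x)\cap\Pi_V$ is the set of vertices of $C(x)$ in $\Pi_V$ and the infimum is over all vertex cutsets separating $x$ from infinity. *)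

theory Defs
  imports "HOL-Probability.Probability"
begin

definition graph :: "'a set \<Rightarrow> 'a set set \<Rightarrow> bool" where
  "graph V E \<longleftrightarrow> (\<forall>e\<in>E. \<exists>u v. u \<noteq> v \<and> u \<in> V \<and> v \<in> V \<and> e = {u, v})"

definition adj :: "'a set set \<Rightarrow> ('a \<times> 'a) set" where
  "adj E = {(u, v). {u, v} \<in> E}"

definition component :: "'a set set \<Rightarrow> 'a \<Rightarrow> 'a set" where
  "component E x = {y. (x, y) \<in> (adj E)\<^sup>*}"

definition locally_finite :: "'a set \<Rightarrow> 'a set set \<Rightarrow> bool" where
  "locally_finite V E \<longleftrightarrow> (\<forall>v\<in>V. finite {e\<in>E. v \<in> e})"

definition connected_graph :: "'a set \<Rightarrow> 'a set set \<Rightarrow> bool" where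
  "connected_graph V E \<longleftrightarrow> (\<forall>u\<in>V. \<forall>v\<in>V. (u, v) \<in> (adj E)\<^sup>*)"

definition bounded_degree :: "'a set \<Rightarrow> 'a set set \<Rightarrow> bool" where
  "bounded_degree V E \<longleftrightarrow> (\<exists>d::nat. \<forall>v\<in>V. finite {e\<in>E. v \<in> e} \<and> card {e\<in>E. v \<in> e} \<le> d)"

definition open_edges :: "'a set set \<Rightarrow> ('a set \<Rightarrow> bool) \<Rightarrow> 'a set set" where
  "open_edges E \<omega> = {e\<in>E. \<omega> e}"

definition cluster :: "'a set set \<Rightarrow> ('a set \<Rightarrow> bool) \<Rightarrow> 'a \<Rightarrow> 'a set" where
  "cluster E \<omega> x = component (open_edges E \<omega>) x"

definition cluster_edges :: "'a set set \<Rightarrow> ('a set \<Rightarrow> bool) \<Rightarrow> 'a \<Rightarrow> 'a set set" where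
  "cluster_edges E \<omega> x = {e \<in> open_edges E \<omega>. e \<subseteq> cluster E \<omega> x}"

definition perc :: "'a set set \<Rightarrow> real \<Rightarrow> ('a set \<Rightarrow> bool) measure" where
  "perc E p = PiM E (\<lambda>_. measure_pmf (bernoulli_pmf p))"

definition ecard :: "'b set \<Rightarrow> ennreal" where
  "ecard A = (if finite A then of_nat (card A) else \<infinity>)"

definition edge_cutset :: "'a set set \<Rightarrow> 'a \<Rightarrow> 'a set set \<Rightarrow> bool" where
  "edge_cutset E x P \<longleftrightarrow> P \<subseteq> E \<and> finite (component (E - P) x)"

definition vertex_deleted_component :: "'a set set \<Rightarrow> 'a set \<Rightarrow> 'a \<Rightarrow> 'a set" where
  "vertex_deleted_component E P x =
     (if x \<in> P then {} else component {e\<in>E. e \<inter> P = {}} x)"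

definition vertex_cutset :: "'a set \<Rightarrow> 'a set set \<Rightarrow> 'a \<Rightarrow> 'a set \<Rightarrow> bool" where
  "vertex_cutset V E x P \<longleftrightarrow> P \<subseteq> V \<and> finite (vertex_deleted_component E P x)"

definition p_cut_E :: "'a set set \<Rightarrow> 'a \<Rightarrow> real" where
  "p_cut_E E x = Sup {p. 0 \<le> p \<and> p \<le> 1 \<and>
     (INF P\<in>{P. edge_cutset E x P}.
        \<integral>\<^sup>+ \<omega>. ecard (cluster_edges E \<omega> x \<inter> P) \<partial>perc E p) = 0}"

definition p_cut_V :: "'a set \<Rightarrow> 'a set set \<Rightarrow> 'a \<Rightarrow> real" where
  "p_cut_V V E x = Sup {p. 0 \<le> p \<and> p \<le> 1 \<and>
     (INF P\<in>{P. vertex_cutset V E x P}.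
        \<integral>\<^sup>+ \<omega>. ecard (cluster E \<omega> x \<inter> P) \<partial>perc E p) = 0}"

end

theory Submission
  imports Defs
begin

text \<open>
  The two critical parameters are compared by transforming cutsets into each other.
  Given an edge cutset \<open>\<Pi>\<^sub>E\<close>, let \<open>K\<close> be the finite component of \<open>x\<close> once the edges of
  \<open>\<Pi>\<^sub>E\<close> are removed. The vertices of \<open>K\<close> lying on an edge that leaves \<open>K\<close> form a vertex
  cutset \<open>\<Pi>\<^sub>V\<close>, and distinct such vertices lie on distinct edges of \<open>\<Pi>\<^sub>E\<close>. For a vertex
  \<open>u\<close> on an edge \<open>e\<close>, \<open>P(u \<in> C(x)) \<le> (1 + 1/p) P(e \<in> C(x))\<close>; summing over \<open>\<Pi>\<^sub>V\<close>, the
  expected size of \<open>C(x) \<inter> \<Pi>\<^sub>V\<close> is at most \<open>1 + 1/p\<close> times that of \<open>C(x) \<inter> \<Pi>\<^sub>E\<close>.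
  Conversely, the edges meeting a vertex cutset \<open>\<Pi>\<^sub>V\<close> form an edge cutset, and when all
  degrees are at most \<open>d\<close> every edge of \<open>C(x) \<inter> \<Pi>\<^sub>E\<close> is one of the at most \<open>d\<close> edges at a
  vertex of \<open>C(x) \<inter> \<Pi>\<^sub>V\<close>. In both directions, infima equal to zero are preserved.
\<close>

section \<open>Clusters and cutsets\<close>

lemma adj_mono: "S \<subseteq> T \<Longrightarrow> adj S \<subseteq> adj T"
  unfolding adj_def by auto

lemma component_mono: "S \<subseteq> T \<Longrightarrow> component S x \<subseteq> component T x"
  unfolding component_def using rtrancl_mono[OF adj_mono] by blast

lemma component_step: "y \<in> component S x \<Longrightarrow> {y, z} \<in> S \<Longrightarrow> z \<in> component S x"
  unfolding component_def adj_def by (auto intro: rtrancl_into_rtrancl)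

lemma component_induct [consumes 1, case_names base step]:
  assumes "y \<in> component S x" and "P x"
    and "\<And>y z. y \<in> component S x \<Longrightarrow> {y, z} \<in> S \<Longrightarrow> P y \<Longrightarrow> P z"
  shows "P y"
proof -
  have "(x, y) \<in> (adj S)\<^sup>*" using assms(1) by (simp add: component_def)
  then show ?thesis
    by (induction rule: rtrancl_induct) (auto simp: adj_def component_def intro: assms(2,3))
qed

lemma component_subset_singleton:
  assumes "\<And>z. {x, z} \<in> S \<Longrightarrow> z = x"
  shows "component S x \<subseteq> {x}"
proof
  fix y assume "y \<in> component S x"
  then show "y \<in> {x}" by (induction rule: component_induct) (use assms in auto)
qed

lemma mem_component_finite_subgraph:
  assumes "y \<in> component S x"
  shows "\<exists>F. finite F \<and> F \<subseteq> S \<and> y \<in> component F x"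
  using assms
proof (induction rule: component_induct)
  case base
  show ?case by (intro exI[of _ "{}"]) (auto simp: component_def)
next
  case (step y z)
  then obtain F where F: "finite F" "F \<subseteq> S" "y \<in> component F x" by blast
  have "y \<in> component (insert {y, z} F) x"
    using F(3) component_mono[of F "insert {y, z} F"] by blast
  then have "z \<in> component (insert {y, z} F) x" by (rule component_step) simp
  then show ?case using F step.hyps(2) by (intro exI[of _ "insert {y, z} F"]) auto
qed

lemma mem_cluster_iff:
  "y \<in> cluster F \<omega> x \<longleftrightarrow> (\<exists>G. finite G \<and> G \<subseteq> F \<and> (\<forall>e\<in>G. \<omega> e) \<and> y \<in> component G x)"
proof
  assume "y \<in> cluster F \<omega> x"
  then have "y \<in> component (open_edges F \<omega>) x" by (simp only: cluster_def)
  from mem_component_finite_subgraph[OF this]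
  obtain G where "finite G" "G \<subseteq> open_edges F \<omega>" "y \<in> component G x" by blast
  then show "\<exists>G. finite G \<and> G \<subseteq> F \<and> (\<forall>e\<in>G. \<omega> e) \<and> y \<in> component G x"
    unfolding open_edges_def by blast
next
  assume "\<exists>G. finite G \<and> G \<subseteq> F \<and> (\<forall>e\<in>G. \<omega> e) \<and> y \<in> component G x"
  then obtain G where G: "G \<subseteq> open_edges F \<omega>" "y \<in> component G x"
    unfolding open_edges_def by blast
  then have "y \<in> component (open_edges F \<omega>) x" using component_mono[OF G(1)] by blast
  then show "y \<in> cluster F \<omega> x" by (simp only: cluster_def)
qed

lemma cluster_mono: "F \<subseteq> E \<Longrightarrow> cluster F \<omega> x \<subseteq> cluster E \<omega> x"
  unfolding cluster_def by (rule component_mono) (auto simp: open_edges_def)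

lemma cluster_Diff_closed_edge: "\<not> \<omega> e \<Longrightarrow> cluster (E - {e}) \<omega> x = cluster E \<omega> x"
proof -
  assume "\<not> \<omega> e"
  then have "open_edges (E - {e}) \<omega> = open_edges E \<omega>" by (auto simp: open_edges_def)
  then show ?thesis by (simp add: cluster_def)
qed

lemma cluster_Diff_fun_upd: "cluster (E - {e}) (w(e := b)) x = cluster (E - {e}) w x"
proof -
  have "open_edges (E - {e}) (w(e := b)) = open_edges (E - {e}) w" by (auto simp: open_edges_def)
  then show ?thesis by (simp add: cluster_def)
qed

lemma open_edge_in_cluster_edges:
  assumes "e \<in> E" "e = {u, v}" "\<omega> e" "u \<in> cluster E \<omega> x"
  shows "e \<in> cluster_edges E \<omega> x"
proof -
  have "e \<in> open_edges E \<omega>" using assms(1,3) by (simp add: open_edges_def)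
  then have "v \<in> cluster E \<omega> x" using assms(2,4) component_step unfolding cluster_def by metis
  then show ?thesis
    using \<open>e \<in> open_edges E \<omega>\<close> assms(2,4) unfolding cluster_edges_def by simp
qed

lemma cluster_all_closed:
  assumes "\<forall>e\<in>E. \<not> \<omega> e"
  shows "cluster E \<omega> x = {x}" "cluster_edges E \<omega> x = {}"
proof -
  have "open_edges E \<omega> = {}" using assms by (auto simp: open_edges_def)
  then show "cluster E \<omega> x = {x}" "cluster_edges E \<omega> x = {}"
    by (auto simp: cluster_def cluster_edges_def component_def adj_def)
qed

lemma edge_subset_vertices: "graph V E \<Longrightarrow> e \<in> E \<Longrightarrow> e \<subseteq> V"
  unfolding graph_def by fastforce

lemma finite_edge: "graph V E \<Longrightarrow> e \<in> E \<Longrightarrow> finite e"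
  unfolding graph_def by auto

lemma edge_other_endpoint:
  assumes "graph V E" "e \<in> E" "u \<in> e"
  obtains v where "v \<noteq> u" "e = {u, v}"
  using assms unfolding graph_def by (metis empty_iff insert_commute insert_iff)

lemma finite_incident_edges:
  assumes "graph V E" "locally_finite V E"
  shows "finite {e\<in>E. z \<in> e}"
proof (cases "z \<in> V")
  case True
  then show ?thesis using assms(2) unfolding locally_finite_def by blast
next
  case False
  then have "{e\<in>E. z \<in> e} = {}" using edge_subset_vertices[OF assms(1)] by blast
  then show ?thesis by (metis finite.emptyI)
qed

lemma countable_component:
  assumes "graph V E" "locally_finite V E"
  shows "countable (component E x)"
proof -
  have fin: "finite (adj E `` {z})" for z
  proof (rule finite_subset)
    show "adj E `` {z} \<subseteq> \<Union>{e\<in>E. z \<in> e}" unfolding adj_def by auto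
    show "finite (\<Union>{e\<in>E. z \<in> e})"
      by (rule finite_Union[OF finite_incident_edges[OF assms]]) (use finite_edge[OF assms(1)] in blast)
  qed
  have "countable (adj E `` Y)" if "countable Y" for Y
    using that by (rule countable_Image[rotated]) (simp add: countable_finite fin)
  moreover have "countable {x}" by simp
  ultimately have "countable ((adj E)\<^sup>* `` {x})" by (rule countable_rtrancl)
  then show ?thesis by (simp add: component_def Image_def)
qed

lemma countable_connected_graph:
  assumes "graph V E" "locally_finite V E" "connected_graph V E" "x \<in> V"
  shows "countable V" "countable E"
proof -
  have "V \<subseteq> component E x"
    using assms(3,4) unfolding connected_graph_def component_def by auto
  then show "countable V"
    using countable_component[OF assms(1,2)] by (rule countable_subset)
  moreover have "E \<subseteq> (\<Union>v\<in>V. {e\<in>E. v \<in> e})"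
    using assms(1) unfolding graph_def by blast
  ultimately show "countable E"
    using finite_incident_edges[OF assms(1,2)]
    by (metis (no_types, lifting) countable_UN countable_finite countable_subset)
qed

lemma vertex_cutset_all_but:
  assumes "graph V E"
  shows "vertex_cutset V E x (V - {x})"
proof -
  have "component {e\<in>E. e \<inter> (V - {x}) = {}} x \<subseteq> {x}"
    by (rule component_subset_singleton) (use edge_subset_vertices[OF assms] in blast)
  then show ?thesis
    unfolding vertex_cutset_def vertex_deleted_component_def by (auto intro: finite_subset)
qed

definition inner_boundary :: "'a set set \<Rightarrow> 'a set \<Rightarrow> 'a set" where
  "inner_boundary E K = {u\<in>K. \<exists>e\<in>E. u \<in> e \<and> \<not> e \<subseteq> K}"

lemma component_avoiding_inner_boundary:
  assumes "x \<in> K"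
  shows "component {e\<in>E. e \<inter> inner_boundary E K = {}} x \<subseteq> K"
proof
  fix y assume "y \<in> component {e\<in>E. e \<inter> inner_boundary E K = {}} x"
  then show "y \<in> K"
    by (induction rule: component_induct) (use assms in \<open>auto simp: inner_boundary_def\<close>)
qed

lemma vertex_cutset_inner_boundary:
  assumes "graph V E" "finite K" "x \<in> K"
  shows "vertex_cutset V E x (inner_boundary E K)"
proof -
  have "inner_boundary E K \<subseteq> V"
    using edge_subset_vertices[OF assms(1)] by (auto simp: inner_boundary_def)
  then show ?thesis
    using component_avoiding_inner_boundary[OF assms(3), of E] assms(2)
    unfolding vertex_cutset_def vertex_deleted_component_def by (auto intro: finite_subset)
qed

lemma inner_boundary_edge_injection:
  fixes x :: 'a
  assumes "graph V E" "PE \<subseteq> E"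
  defines "K \<equiv> component (E - PE) x"
  obtains g where "inj_on g (inner_boundary E K)" "g ` inner_boundary E K \<subseteq> PE"
    "\<And>u. u \<in> inner_boundary E K \<Longrightarrow> u \<in> g u"
proof -
  have "\<exists>e. e \<in> PE \<and> u \<in> e \<and> \<not> e \<subseteq> K" if u: "u \<in> inner_boundary E K" for u
  proof -
    obtain e where e: "e \<in> E" "u \<in> e" "\<not> e \<subseteq> K" and "u \<in> K"
      using u unfolding inner_boundary_def by blast
    obtain w where w: "e = {u, w}" using edge_other_endpoint[OF assms(1) e(1,2)] by blast
    have "e \<in> PE"
    proof (rule ccontr)
      assume "e \<notin> PE"
      then have "w \<in> K" using \<open>u \<in> K\<close> e(1) w component_step unfolding K_def by (metis DiffI)
      then show False using e(3) \<open>u \<in> K\<close> w by blast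
    qed
    then show ?thesis using e by blast
  qed
  then obtain g where g: "\<And>u. u \<in> inner_boundary E K \<Longrightarrow> g u \<in> PE \<and> u \<in> g u \<and> \<not> g u \<subseteq> K"
    by metis
  have "inj_on g (inner_boundary E K)"
  proof (rule inj_onI)
    fix u1 u2
    assume u: "u1 \<in> inner_boundary E K" "u2 \<in> inner_boundary E K" "g u1 = g u2"
    show "u1 = u2"
    proof (rule ccontr)
      assume "u1 \<noteq> u2"
      have "g u1 \<in> E" "u1 \<in> g u1" using g[OF u(1)] assms(2) by auto
      then obtain w where "g u1 = {u1, w}" by (rule edge_other_endpoint[OF assms(1)])
      then have "g u1 = {u1, u2}" using g[OF u(2)] u(3) \<open>u1 \<noteq> u2\<close> by auto
      moreover have "u1 \<in> K" "u2 \<in> K" using u(1,2) by (auto simp: inner_boundary_def)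
      ultimately show False using g[OF u(1)] by auto
    qed
  qed
  then show ?thesis by (rule that) (use g in auto)
qed

lemma edge_cutset_incident_edges:
  assumes "vertex_cutset V E x PV"
  shows "edge_cutset E x {e\<in>E. e \<inter> PV \<noteq> {}}"
proof -
  have "finite (component {e\<in>E. e \<inter> PV = {}} x)"
  proof (cases "x \<in> PV")
    case True
    have "component {e\<in>E. e \<inter> PV = {}} x \<subseteq> {x}"
      by (rule component_subset_singleton) (use True in auto)
    then show ?thesis by (rule finite_subset) simp
  next
    case False
    then show ?thesis using assms by (simp add: vertex_cutset_def vertex_deleted_component_def)
  qed
  moreover have "E - {e\<in>E. e \<inter> PV \<noteq> {}} = {e\<in>E. e \<inter> PV = {}}" by auto
  ultimately show ?thesis unfolding edge_cutset_def by auto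
qed

section \<open>Measurability and independence in bond percolation\<close>

lemma pred_perc_open:
  assumes "e \<in> E"
  shows "Measurable.pred (perc E p) (\<lambda>\<omega>. \<omega> e)"
proof -
  have "(\<lambda>\<omega>. \<omega> e) \<in> measurable (perc E p) (measure_pmf (bernoulli_pmf p))"
    unfolding perc_def using assms by (rule measurable_component_singleton)
  then show ?thesis by (simp add: measurable_cong_sets[OF refl sets_measure_pmf_count_space])
qed

lemma pred_perc_mem_cluster:
  assumes "countable E" "F \<subseteq> E"
  shows "Measurable.pred (perc E p) (\<lambda>\<omega>. y \<in> cluster F \<omega> x)"
proof -
  let ?G = "{G. finite G \<and> G \<subseteq> F \<and> y \<in> component G x}"
  have "countable ?G"
    by (rule countable_subset[OF _ countable_Collect_finite_subset[OF countable_subset[OF assms(2,1)]]])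
      auto
  moreover have "Measurable.pred (perc E p) (\<lambda>\<omega>. \<forall>e\<in>G. \<omega> e)" if "G \<in> ?G" for G
    using that assms(2) by (intro pred_intros_finite(3) pred_perc_open) auto
  ultimately have "(\<Union>G\<in>?G. {\<omega>\<in>space (perc E p). \<forall>e\<in>G. \<omega> e}) \<in> sets (perc E p)"
    by (intro sets.countable_UN') (auto simp: pred_def)
  moreover have "{\<omega>\<in>space (perc E p). y \<in> cluster F \<omega> x}
      = (\<Union>G\<in>?G. {\<omega>\<in>space (perc E p). \<forall>e\<in>G. \<omega> e})"
    unfolding mem_cluster_iff by blast
  ultimately show ?thesis unfolding pred_def by simp
qed

lemma pred_perc_mem_cluster_edges:
  assumes "countable E" "e \<in> E" "finite e"
  shows "Measurable.pred (perc E p) (\<lambda>\<omega>. e \<in> cluster_edges E \<omega> x)"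
proof -
  have eq: "(\<lambda>\<omega>. e \<in> cluster_edges E \<omega> x) = (\<lambda>\<omega>. \<omega> e \<and> (\<forall>y\<in>e. y \<in> cluster E \<omega> x))"
    using assms(2) by (auto simp: cluster_edges_def open_edges_def)
  show ?thesis unfolding eq
    by (intro pred_intros_logic(3) pred_perc_open pred_intros_finite(3) pred_perc_mem_cluster)
      (use assms in auto)
qed

lemma nn_integral_PiM_split_coordinate:
  assumes M: "\<And>i. i \<in> I \<Longrightarrow> prob_space (M i)" and e: "e \<in> I"
    and g: "g \<in> borel_measurable (PiM I M)"
  shows "(\<integral>\<^sup>+\<omega>. g \<omega> \<partial>PiM I M) = (\<integral>\<^sup>+b. \<integral>\<^sup>+X. g (X(e := b)) \<partial>PiM (I - {e}) M \<partial>M e)"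
proof -
  let ?upd = "\<lambda>z. (snd z)(e := fst z)"
  have I: "insert e (I - {e}) = I" using e by auto
  have distr: "distr (M e \<Otimes>\<^sub>M PiM (I - {e}) M) (PiM I M) ?upd = PiM I M"
    using distr_pair_PiM_eq_PiM[of "I - {e}" M e] M e unfolding I by (simp add: split_beta')
  have upd: "?upd \<in> measurable (M e \<Otimes>\<^sub>M PiM (I - {e}) M) (PiM I M)"
    by (rule measurable_fun_upd[where J="I - {e}"]) (use e in auto)
  interpret sigma_finite_measure "PiM (I - {e}) M"
    using M by (intro prob_space_imp_sigma_finite prob_space_PiM) auto
  have "(\<integral>\<^sup>+\<omega>. g \<omega> \<partial>PiM I M) = integral\<^sup>N (distr (M e \<Otimes>\<^sub>M PiM (I - {e}) M) (PiM I M) ?upd) g"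
    by (simp add: distr)
  also have "\<dots> = (\<integral>\<^sup>+z. g (?upd z) \<partial>(M e \<Otimes>\<^sub>M PiM (I - {e}) M))"
    by (rule nn_integral_distr[OF upd]) (simp add: g)
  also have "\<dots> = (\<integral>\<^sup>+b. \<integral>\<^sup>+X. g (X(e := b)) \<partial>PiM (I - {e}) M \<partial>M e)"
    using nn_integral_fst[of "\<lambda>z. g (?upd z)" "M e"] measurable_comp[OF upd g]
    by (simp add: comp_def)
  finally show ?thesis .
qed

lemma nn_integral_PiM_coordinate_mult:
  assumes M: "\<And>i. i \<in> I \<Longrightarrow> prob_space (M i)" and e: "e \<in> I"
    and h: "h \<in> borel_measurable (M e)" and k: "k \<in> borel_measurable (PiM I M)"
    and k_indep: "\<And>w b. k (w(e := b)) = k w"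
  shows "(\<integral>\<^sup>+\<omega>. h (\<omega> e) * k \<omega> \<partial>PiM I M) = (\<integral>\<^sup>+b. h b \<partial>M e) * (\<integral>\<^sup>+\<omega>. k \<omega> \<partial>PiM I M)"
proof -
  define C where "C = (\<integral>\<^sup>+X. k X \<partial>PiM (I - {e}) M)"
  have k': "k \<in> borel_measurable (PiM (I - {e}) M)"
  proof -
    obtain b where "b \<in> space (M e)" using prob_space.not_empty[OF M[OF e]] by blast
    then have "(\<lambda>X. X(e := b)) \<in> measurable (PiM (I - {e}) M) (PiM I M)"
      by (intro measurable_fun_upd[where J="I - {e}"]) (use e in auto)
    from measurable_comp[OF this k] show ?thesis by (simp add: comp_def k_indep)
  qed
  have hk: "(\<lambda>\<omega>. h (\<omega> e) * k \<omega>) \<in> borel_measurable (PiM I M)"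
    using measurable_comp[OF measurable_component_singleton[OF e, of M] h] k by (simp add: comp_def)
  have "(\<integral>\<^sup>+\<omega>. h (\<omega> e) * k \<omega> \<partial>PiM I M) = (\<integral>\<^sup>+b. h b * C \<partial>M e)"
    by (simp add: nn_integral_PiM_split_coordinate[OF M e hk] k_indep nn_integral_cmult[OF k'] C_def)
  also have "\<dots> = (\<integral>\<^sup>+b. h b \<partial>M e) * C" by (rule nn_integral_multc[OF h])
  also have "C = (\<integral>\<^sup>+\<omega>. k \<omega> \<partial>PiM I M)"
    using prob_space.emeasure_space_1[OF M[OF e]]
    by (simp add: nn_integral_PiM_split_coordinate[OF M e k] k_indep C_def)
  finally show ?thesis .
qed

lemma emeasure_perc_open_conj_independent:
  assumes "e \<in> E" "0 \<le> p" "p \<le> 1"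
    and Q: "Measurable.pred (perc E p) Q" and Q_indep: "\<And>w b. Q (w(e := b)) = Q w"
  shows "emeasure (perc E p) {\<omega>\<in>space (perc E p). \<omega> e \<and> Q \<omega>}
    = ennreal p * emeasure (perc E p) {\<omega>\<in>space (perc E p). Q \<omega>}"
proof -
  let ?P = "perc E p" and ?B = "measure_pmf (bernoulli_pmf p)"
  have "(\<integral>\<^sup>+b. of_bool b \<partial>?B) = (\<integral>\<^sup>+b. indicator {True} b \<partial>?B)"
    by (intro nn_integral_cong) (auto simp: indicator_def)
  also have "\<dots> = ennreal p"
    using assms(2,3) by (simp add: emeasure_pmf_single)
  finally have bernoulli: "(\<integral>\<^sup>+b. of_bool b \<partial>?B) = ennreal p" .
  have k: "(\<lambda>\<omega>. of_bool (Q \<omega>) :: ennreal) \<in> borel_measurable ?P"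
    using measurable_compose[OF Q measurable_of_bool] .
  have "Measurable.pred ?P (\<lambda>\<omega>. \<omega> e \<and> Q \<omega>)"
    using pred_perc_open[OF assms(1)] Q by (rule pred_intros_logic)
  then have "emeasure ?P {\<omega>\<in>space ?P. \<omega> e \<and> Q \<omega>}
      = (\<integral>\<^sup>+\<omega>. indicator {\<omega>\<in>space ?P. \<omega> e \<and> Q \<omega>} \<omega> \<partial>?P)"
    by (simp add: pred_def)
  also have "\<dots> = (\<integral>\<^sup>+\<omega>. of_bool (\<omega> e) * of_bool (Q \<omega>) \<partial>?P)"
    by (intro nn_integral_cong) (simp add: indicator_def)
  also have "\<dots> = (\<integral>\<^sup>+b. of_bool b \<partial>?B) * (\<integral>\<^sup>+\<omega>. of_bool (Q \<omega>) \<partial>?P)"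
    unfolding perc_def
    by (rule nn_integral_PiM_coordinate_mult)
      (use assms(1) k[unfolded perc_def] Q_indep in \<open>auto simp: prob_space_measure_pmf\<close>)
  also have "(\<integral>\<^sup>+\<omega>. of_bool (Q \<omega>) \<partial>?P) = (\<integral>\<^sup>+\<omega>. indicator {\<omega>\<in>space ?P. Q \<omega>} \<omega> \<partial>?P)"
    by (intro nn_integral_cong) (simp add: indicator_def)
  also have "\<dots> = emeasure ?P {\<omega>\<in>space ?P. Q \<omega>}"
    using Q by (simp add: pred_def)
  finally show ?thesis by (simp add: bernoulli)
qed

lemma AE_perc_zero_all_closed:
  assumes "countable E"
  shows "AE \<omega> in perc E 0. \<forall>e\<in>E. \<not> \<omega> e"
proof -
  have "AE b in measure_pmf (bernoulli_pmf 0). \<not> b"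
    unfolding AE_measure_pmf_iff by (auto simp: set_pmf_iff)
  then have "\<forall>e\<in>E. AE \<omega> in perc E 0. \<not> \<omega> e"
    unfolding perc_def by (auto intro!: AE_PiM_component prob_space_measure_pmf)
  then show ?thesis by (subst AE_ball_countable[OF assms])
qed

section \<open>Comparing expected cut sizes\<close>

definition expected_cut_vertices :: "'a set set \<Rightarrow> real \<Rightarrow> 'a \<Rightarrow> 'a set \<Rightarrow> ennreal" where
  "expected_cut_vertices E p x P = (\<integral>\<^sup>+\<omega>. ecard (cluster E \<omega> x \<inter> P) \<partial>perc E p)"

definition expected_cut_edges :: "'a set set \<Rightarrow> real \<Rightarrow> 'a \<Rightarrow> 'a set set \<Rightarrow> ennreal" where
  "expected_cut_edges E p x P = (\<integral>\<^sup>+\<omega>. ecard (cluster_edges E \<omega> x \<inter> P) \<partial>perc E p)"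

lemma ecard_Int_eq_nn_integral_count_space:
  "ecard (S \<inter> P) = (\<integral>\<^sup>+y. indicator S y \<partial>count_space P)"
proof -
  have "(\<integral>\<^sup>+y. indicator S y \<partial>count_space P) = (\<integral>\<^sup>+y. indicator (S \<inter> P) y \<partial>count_space P)"
    by (intro nn_integral_cong) (auto simp: indicator_def)
  also have "\<dots> = ecard (S \<inter> P)"
    by (subst nn_integral_indicator) (auto simp: emeasure_count_space ecard_def)
  finally show ?thesis by simp
qed

lemma nn_integral_cmult_ecard:
  assumes "countable P" and S: "\<And>y. y \<in> P \<Longrightarrow> Measurable.pred M (\<lambda>\<omega>. y \<in> S \<omega>)"
  shows "(\<integral>\<^sup>+\<omega>. c * ecard (S \<omega> \<inter> P) \<partial>M)
    = c * (\<integral>\<^sup>+y. emeasure M {\<omega>\<in>space M. y \<in> S \<omega>} \<partial>count_space P)"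
proof -
  have S_sets: "{\<omega>\<in>space M. y \<in> S \<omega>} \<in> sets M" if "y \<in> P" for y
    using S[OF that] by (simp add: pred_def)
  have "(\<integral>\<^sup>+\<omega>. c * ecard (S \<omega> \<inter> P) \<partial>M)
      = (\<integral>\<^sup>+\<omega>. \<integral>\<^sup>+y. c * indicator {\<omega>\<in>space M. y \<in> S \<omega>} \<omega> \<partial>count_space P \<partial>M)"
  proof (intro nn_integral_cong)
    fix \<omega> assume "\<omega> \<in> space M"
    then have "(\<integral>\<^sup>+y. c * indicator {\<omega>\<in>space M. y \<in> S \<omega>} \<omega> \<partial>count_space P)
        = (\<integral>\<^sup>+y. c * indicator (S \<omega>) y \<partial>count_space P)"
      by (intro nn_integral_cong) (auto simp: indicator_def)
    then show "c * ecard (S \<omega> \<inter> P)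
        = (\<integral>\<^sup>+y. c * indicator {\<omega>\<in>space M. y \<in> S \<omega>} \<omega> \<partial>count_space P)"
      by (simp add: nn_integral_cmult ecard_Int_eq_nn_integral_count_space)
  qed
  also have "\<dots> = (\<integral>\<^sup>+y. \<integral>\<^sup>+\<omega>. c * indicator {\<omega>\<in>space M. y \<in> S \<omega>} \<omega> \<partial>M \<partial>count_space P)"
    using assms(1) S_sets by (intro nn_integral_count_space_nn_integral) auto
  also have "\<dots> = (\<integral>\<^sup>+y. c * emeasure M {\<omega>\<in>space M. y \<in> S \<omega>} \<partial>count_space P)"
    using S_sets by (intro nn_integral_cong) (simp add: nn_integral_cmult_indicator)
  also have "\<dots> = c * (\<integral>\<^sup>+y. emeasure M {\<omega>\<in>space M. y \<in> S \<omega>} \<partial>count_space P)"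
    by (rule nn_integral_cmult) simp
  finally show ?thesis .
qed

lemma nn_integral_count_space_mono_set:
  assumes "A \<subseteq> B"
  shows "(\<integral>\<^sup>+x. f x \<partial>count_space A) \<le> (\<integral>\<^sup>+x. f x \<partial>count_space B)"
proof -
  have "(\<integral>\<^sup>+x. f x * indicator A x \<partial>count_space UNIV) \<le> (\<integral>\<^sup>+x. f x * indicator B x \<partial>count_space UNIV)"
    using assms by (intro nn_integral_mono) (auto simp: indicator_def)
  then show ?thesis by (simp add: nn_integral_count_space_indicator)
qed

lemma ecard_le_card_UN:
  assumes "A \<subseteq> (\<Union>v\<in>B. D v)" "\<And>v. v \<in> B \<Longrightarrow> finite (D v) \<and> card (D v) \<le> d"
  shows "ecard A \<le> of_nat d * ecard B"
proof (cases "finite B")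
  case True
  then have "finite (\<Union>v\<in>B. D v)" using assms(2) by auto
  then have "finite A" using assms(1) by (rule finite_subset[rotated])
  have "card A \<le> card (\<Union>v\<in>B. D v)"
    using assms(1) \<open>finite (\<Union>v\<in>B. D v)\<close> by (rule card_mono[rotated])
  also have "\<dots> \<le> (\<Sum>v\<in>B. card (D v))" by (rule card_UN_le[OF True])
  also have "\<dots> \<le> d * card B" using assms(2) sum_bounded_above[of B "\<lambda>v. card (D v)" d] by (auto simp: mult.commute)
  finally show ?thesis using \<open>finite A\<close> True by (simp add: ecard_def of_nat_mult[symmetric] del: of_nat_mult)
next
  case False
  show ?thesis
  proof (cases "d = 0")
    case True
    then have "A = {}" using assms by fastforce
    then show ?thesis by (simp add: ecard_def)
  next
    case False
    then show ?thesis
      using \<open>infinite B\<close> by (simp add: ecard_def ennreal_of_nat_eq_real_of_nat ennreal_mult_top)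
  qed
qed

lemma ennreal_le_one_plus_inverse_mult:
  fixes a a' b :: ennreal
  assumes "0 < p" "a \<le> b + a'" "ennreal p * a' \<le> b"
  shows "a \<le> ennreal (1 + 1 / p) * b"
proof -
  have "a' = ennreal (1 / p) * (ennreal p * a')"
    using assms(1) by (simp add: ennreal_mult[symmetric] mult.assoc[symmetric])
  also have "\<dots> \<le> ennreal (1 / p) * b"
    using assms(3) by (rule mult_left_mono) simp
  finally have "a \<le> b + ennreal (1 / p) * b"
    using assms(2) by (meson add_left_mono order_trans)
  also have "\<dots> = ennreal (1 + 1 / p) * b"
    using assms(1) by (simp add: ennreal_plus distrib_right)
  finally show ?thesis .
qed

text \<open>Either \<open>e\<close> is open, and then it belongs to the cluster, or \<open>u\<close> is joined to \<open>x\<close>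
  without using \<open>e\<close>; the latter event is independent of \<open>e\<close> being open, which has
  probability \<open>p\<close> and again puts \<open>e\<close> into the cluster.\<close>

lemma emeasure_vertex_in_cluster_le_edge_in_cluster:
  assumes "graph V E" "countable E" "0 < p" "p \<le> 1" "e \<in> E" "u \<in> e"
  shows "emeasure (perc E p) {\<omega>\<in>space (perc E p). u \<in> cluster E \<omega> x}
    \<le> ennreal (1 + 1 / p) * emeasure (perc E p) {\<omega>\<in>space (perc E p). e \<in> cluster_edges E \<omega> x}"
proof -
  let ?P = "perc E p"
  define A where "A = {\<omega>\<in>space ?P. u \<in> cluster E \<omega> x}"
  define B where "B = {\<omega>\<in>space ?P. e \<in> cluster_edges E \<omega> x}"
  define A' where "A' = {\<omega>\<in>space ?P. u \<in> cluster (E - {e}) \<omega> x}"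
  obtain v where e: "e = {u, v}" using edge_other_endpoint[OF assms(1,5,6)] by blast
  have B_sets: "B \<in> sets ?P"
    using pred_perc_mem_cluster_edges[OF assms(2,5) finite_edge[OF assms(1,5)]]
    by (simp add: B_def pred_def)
  have pred_A': "Measurable.pred ?P (\<lambda>\<omega>. u \<in> cluster (E - {e}) \<omega> x)"
    using assms(2) by (rule pred_perc_mem_cluster) blast
  then have A'_sets: "A' \<in> sets ?P" by (simp add: A'_def pred_def)
  have "A \<subseteq> B \<union> A'"
  proof
    fix \<omega> assume "\<omega> \<in> A"
    then show "\<omega> \<in> B \<union> A'"
      using open_edge_in_cluster_edges[OF assms(5) e, of \<omega> x] cluster_Diff_closed_edge[of \<omega> e E x]
      by (cases "\<omega> e") (auto simp: A_def B_def A'_def)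
  qed
  then have "emeasure ?P A \<le> emeasure ?P B + emeasure ?P A'"
    using emeasure_mono[of A "B \<union> A'" ?P] emeasure_subadditive[OF B_sets A'_sets] B_sets A'_sets
    by (meson order_trans sets.Un)
  moreover have "ennreal p * emeasure ?P A' = emeasure ?P {\<omega>\<in>space ?P. \<omega> e \<and> u \<in> cluster (E - {e}) \<omega> x}"
    unfolding A'_def using assms(3,4,5) pred_A'
    by (intro emeasure_perc_open_conj_independent[symmetric]) (simp_all add: cluster_Diff_fun_upd)
  moreover have "\<dots> \<le> emeasure ?P B"
  proof (rule emeasure_mono[OF _ B_sets])
    show "{\<omega>\<in>space ?P. \<omega> e \<and> u \<in> cluster (E - {e}) \<omega> x} \<subseteq> B"
      using cluster_mono[of "E - {e}" E] open_edge_in_cluster_edges[OF assms(5) e]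
      unfolding B_def by blast
  qed
  ultimately show ?thesis
    unfolding A_def B_def by (intro ennreal_le_one_plus_inverse_mult[OF assms(3)]) auto
qed

lemma vertex_cutset_dominated_by_edge_cutset:
  assumes "graph V E" "countable E" "0 < p" "p \<le> 1" "edge_cutset E x PE"
  shows "\<exists>PV. vertex_cutset V E x PV \<and>
    expected_cut_vertices E p x PV \<le> ennreal (1 + 1 / p) * expected_cut_edges E p x PE"
proof -
  define K where "K = component (E - PE) x"
  define PV where "PV = inner_boundary E K"
  define A where "A u = emeasure (perc E p) {\<omega>\<in>space (perc E p). u \<in> cluster E \<omega> x}" for u
  define B where "B e = emeasure (perc E p) {\<omega>\<in>space (perc E p). e \<in> cluster_edges E \<omega> x}" for e
  have PE: "PE \<subseteq> E" and "finite K" using assms(5) by (auto simp: edge_cutset_def K_def)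
  have "x \<in> K" by (simp add: K_def component_def)
  obtain g where g: "inj_on g PV" "g ` PV \<subseteq> PE" "\<And>u. u \<in> PV \<Longrightarrow> u \<in> g u"
    using inner_boundary_edge_injection[OF assms(1) PE] unfolding PV_def K_def by blast
  have "countable PV"
    using \<open>finite K\<close> by (intro countable_finite) (auto intro: finite_subset simp: PV_def inner_boundary_def)
  have "countable PE" using PE assms(2) by (rule countable_subset)
  have "expected_cut_vertices E p x PV = (\<integral>\<^sup>+u. A u \<partial>count_space PV)"
    using nn_integral_cmult_ecard[where c=1, OF \<open>countable PV\<close> pred_perc_mem_cluster[OF assms(2)]]
    by (simp add: expected_cut_vertices_def A_def)
  also have "\<dots> \<le> (\<integral>\<^sup>+u. ennreal (1 + 1 / p) * B (g u) \<partial>count_space PV)"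
    using g(2,3) PE unfolding A_def B_def
    by (intro nn_integral_mono emeasure_vertex_in_cluster_le_edge_in_cluster[OF assms(1-4)]) auto
  also have "\<dots> = ennreal (1 + 1 / p) * (\<integral>\<^sup>+e. B e \<partial>count_space (g ` PV))"
    using nn_integral_bij_count_space[OF bij_betw_imageI[OF g(1) refl], of B]
    by (simp add: nn_integral_cmult)
  also have "\<dots> \<le> ennreal (1 + 1 / p) * (\<integral>\<^sup>+e. B e \<partial>count_space PE)"
    using g(2) by (intro mult_left_mono nn_integral_count_space_mono_set) auto
  also have "\<dots> = ennreal (1 + 1 / p) * expected_cut_edges E p x PE"
    using nn_integral_cmult_ecard[where c=1, OF \<open>countable PE\<close> pred_perc_mem_cluster_edges[OF assms(2)]]
      PE finite_edge[OF assms(1)]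
    by (simp add: expected_cut_edges_def B_def subset_eq)
  finally show ?thesis
    using vertex_cutset_inner_boundary[OF assms(1) \<open>finite K\<close> \<open>x \<in> K\<close>] unfolding PV_def by blast
qed

lemma edge_cutset_dominated_by_vertex_cutset:
  assumes "countable V" "countable E"
    and degree: "\<And>v. v \<in> V \<Longrightarrow> finite {e\<in>E. v \<in> e} \<and> card {e\<in>E. v \<in> e} \<le> d"
    and PV: "vertex_cutset V E x PV"
  shows "\<exists>PE. edge_cutset E x PE \<and>
    expected_cut_edges E p x PE \<le> of_nat d * expected_cut_vertices E p x PV"
proof -
  define PE where "PE = {e\<in>E. e \<inter> PV \<noteq> {}}"
  have "PV \<subseteq> V" using PV by (simp add: vertex_cutset_def)
  have "countable PV" using \<open>PV \<subseteq> V\<close> assms(1) by (rule countable_subset)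
  have pred_PV: "\<And>y. y \<in> PV \<Longrightarrow> Measurable.pred (perc E p) (\<lambda>\<omega>. y \<in> cluster E \<omega> x)"
    using pred_perc_mem_cluster[OF assms(2)] by blast
  have "ecard (cluster_edges E \<omega> x \<inter> PE) \<le> of_nat d * ecard (cluster E \<omega> x \<inter> PV)" for \<omega>
  proof (rule ecard_le_card_UN)
    show "cluster_edges E \<omega> x \<inter> PE \<subseteq> (\<Union>v\<in>cluster E \<omega> x \<inter> PV. {e\<in>E. v \<in> e})"
      by (auto simp: cluster_edges_def PE_def open_edges_def)
    show "\<And>v. v \<in> cluster E \<omega> x \<inter> PV \<Longrightarrow> finite {e\<in>E. v \<in> e} \<and> card {e\<in>E. v \<in> e} \<le> d"
      using degree \<open>PV \<subseteq> V\<close> by blast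
  qed
  then have "expected_cut_edges E p x PE \<le> (\<integral>\<^sup>+\<omega>. of_nat d * ecard (cluster E \<omega> x \<inter> PV) \<partial>perc E p)"
    unfolding expected_cut_edges_def by (rule nn_integral_mono)
  also have "\<dots> = of_nat d * expected_cut_vertices E p x PV"
    using nn_integral_cmult_ecard[OF \<open>countable PV\<close> pred_PV, where c="of_nat d"]
      nn_integral_cmult_ecard[OF \<open>countable PV\<close> pred_PV, where c=1]
    by (simp add: expected_cut_vertices_def)
  finally show ?thesis using edge_cutset_incident_edges[OF PV] unfolding PE_def by blast
qed

lemma INF_edge_cutsets_at_zero:
  assumes "countable E"
  shows "(INF P\<in>{P. edge_cutset E x P}. expected_cut_edges E 0 x P) = 0"
proof -
  have "AE \<omega> in perc E 0. ecard (cluster_edges E \<omega> x \<inter> E) = 0"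
    using AE_perc_zero_all_closed[OF assms] by eventually_elim (simp add: cluster_all_closed ecard_def)
  then have "expected_cut_edges E 0 x E = 0"
    by (simp add: expected_cut_edges_def nn_integral_cong_AE)
  moreover have "edge_cutset E x E"
    unfolding edge_cutset_def by (simp add: component_def adj_def)
  then have "(INF P\<in>{P. edge_cutset E x P}. expected_cut_edges E 0 x P) \<le> expected_cut_edges E 0 x E"
    by (intro INF_lower) simp
  ultimately show ?thesis by simp
qed

lemma INF_vertex_cutsets_at_zero:
  assumes "graph V E" "countable E"
  shows "(INF P\<in>{P. vertex_cutset V E x P}. expected_cut_vertices E 0 x P) = 0"
proof -
  have "AE \<omega> in perc E 0. ecard (cluster E \<omega> x \<inter> (V - {x})) = 0"
    using AE_perc_zero_all_closed[OF assms(2)]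
    by eventually_elim (simp add: cluster_all_closed ecard_def)
  then have "expected_cut_vertices E 0 x (V - {x}) = 0"
    by (simp add: expected_cut_vertices_def nn_integral_cong_AE)
  moreover have "(INF P\<in>{P. vertex_cutset V E x P}. expected_cut_vertices E 0 x P)
      \<le> expected_cut_vertices E 0 x (V - {x})"
    using vertex_cutset_all_but[OF assms(1)] by (intro INF_lower) simp
  ultimately show ?thesis by simp
qed

section \<open>The critical parameters\<close>

lemma INF_eq_zero_if_dominated:
  fixes f :: "'b \<Rightarrow> ennreal" and g :: "'c \<Rightarrow> ennreal"
  assumes dominated: "\<And>a. a \<in> A \<Longrightarrow> \<exists>b\<in>B. f b \<le> ennreal c * g a"
    and "0 \<le> c" and "(INF a\<in>A. g a) = 0"
  shows "(INF b\<in>B. f b) = 0"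
proof -
  have bound: "(INF b\<in>B. f b) \<le> ennreal c * ennreal \<epsilon>" if "0 < \<epsilon>" for \<epsilon>
  proof -
    have "(INF a\<in>A. g a) < ennreal \<epsilon>" using assms(3) that by simp
    then obtain a where "a \<in> A" "g a < ennreal \<epsilon>" by (auto simp: INF_less_iff)
    then obtain b where "b \<in> B" "f b \<le> ennreal c * g a" using dominated by blast
    then have "(INF b\<in>B. f b) \<le> ennreal c * g a" by (meson INF_lower2)
    also have "\<dots> \<le> ennreal c * ennreal \<epsilon>" using \<open>g a < ennreal \<epsilon>\<close> by (intro mult_left_mono) auto
    finally show ?thesis .
  qed
  have "(INF b\<in>B. f b) \<le> 0"
  proof (rule ennreal_le_epsilon)
    fix e :: real assume "0 < e"
    have "(INF b\<in>B. f b) \<le> ennreal c * ennreal (e / (c + 1))"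
      using bound \<open>0 < e\<close> \<open>0 \<le> c\<close> by simp
    also have "\<dots> = ennreal (c / (c + 1) * e)"
      using \<open>0 \<le> c\<close> \<open>0 < e\<close> by (simp add: ennreal_mult[symmetric])
    also have "\<dots> \<le> ennreal e"
      using \<open>0 < e\<close> \<open>0 \<le> c\<close> by (intro ennreal_leI mult_left_le_one_le) auto
    finally show "(INF b\<in>B. f b) \<le> 0 + ennreal e" by simp
  qed
  then show ?thesis by simp
qed

lemma Sup_unit_interval_mono:
  fixes P Q :: "real \<Rightarrow> bool"
  assumes "P 0" "\<And>p. 0 \<le> p \<Longrightarrow> p \<le> 1 \<Longrightarrow> P p \<Longrightarrow> Q p"
  shows "Sup {p. 0 \<le> p \<and> p \<le> 1 \<and> P p} \<le> Sup {p. 0 \<le> p \<and> p \<le> 1 \<and> Q p}"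
proof (rule cSup_subset_mono)
  have "0 \<in> {p. 0 \<le> p \<and> p \<le> 1 \<and> P p}" using assms(1) by simp
  then show "{p. 0 \<le> p \<and> p \<le> 1 \<and> P p} \<noteq> {}" by blast
  show "bdd_above {p. 0 \<le> p \<and> p \<le> 1 \<and> Q p}" by (rule bdd_aboveI[of _ 1]) simp
qed (use assms(2) in auto)

lemma INF_vertex_cutsets_eq_zero_if_edge_cutsets:
  assumes "graph V E" "countable E" "0 \<le> p" "p \<le> 1"
    and "(INF P\<in>{P. edge_cutset E x P}. expected_cut_edges E p x P) = 0"
  shows "(INF P\<in>{P. vertex_cutset V E x P}. expected_cut_vertices E p x P) = 0"
proof (cases "p = 0")
  case True
  then show ?thesis using INF_vertex_cutsets_at_zero[OF assms(1,2)] by simp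
next
  case False
  with assms(3) have "0 < p" by simp
  show ?thesis
  proof (rule INF_eq_zero_if_dominated[where c = "1 + 1 / p"])
    fix PE assume "PE \<in> {P. edge_cutset E x P}"
    then show "\<exists>PV\<in>{P. vertex_cutset V E x P}.
        expected_cut_vertices E p x PV \<le> ennreal (1 + 1 / p) * expected_cut_edges E p x PE"
      using vertex_cutset_dominated_by_edge_cutset[OF assms(1,2) \<open>0 < p\<close> assms(4)] by blast
  qed (use \<open>0 < p\<close> assms(5) in auto)
qed

lemma INF_edge_cutsets_eq_zero_if_vertex_cutsets:
  assumes "countable V" "countable E" "bounded_degree V E"
    and "(INF P\<in>{P. vertex_cutset V E x P}. expected_cut_vertices E p x P) = 0"
  shows "(INF P\<in>{P. edge_cutset E x P}. expected_cut_edges E p x P) = 0"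
proof -
  obtain d where "\<And>v. v \<in> V \<Longrightarrow> finite {e\<in>E. v \<in> e} \<and> card {e\<in>E. v \<in> e} \<le> d"
    using assms(3) by (auto simp: bounded_degree_def)
  note dominated = edge_cutset_dominated_by_vertex_cutset[OF assms(1,2) this]
  show ?thesis
  proof (rule INF_eq_zero_if_dominated[where c = "real d"])
    fix PV assume "PV \<in> {P. vertex_cutset V E x P}"
    then show "\<exists>PE\<in>{P. edge_cutset E x P}.
        expected_cut_edges E p x PE \<le> ennreal (real d) * expected_cut_vertices E p x PV"
      using dominated by (auto simp: ennreal_of_nat_eq_real_of_nat)
  qed (use assms(4) in auto)
qed

lemma p_cut_E_eq:
  "p_cut_E E x = Sup {p. 0 \<le> p \<and> p \<le> 1 \<and>
     (INF P\<in>{P. edge_cutset E x P}. expected_cut_edges E p x P) = 0}"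
  by (simp add: p_cut_E_def expected_cut_edges_def)

lemma p_cut_V_eq:
  "p_cut_V V E x = Sup {p. 0 \<le> p \<and> p \<le> 1 \<and>
     (INF P\<in>{P. vertex_cutset V E x P}. expected_cut_vertices E p x P) = 0}"
  by (simp add: p_cut_V_def expected_cut_vertices_def)

theorem lemma2p1:
  fixes V :: "'a set" and E :: "'a set set" and x :: 'a
  assumes "graph V E" and "locally_finite V E" and "connected_graph V E"
    and "infinite V" and "x \<in> V"
  shows "p_cut_E E x \<le> p_cut_V V E x \<and>
         (bounded_degree V E \<longrightarrow> p_cut_E E x = p_cut_V V E x)"
proof -
  have "countable V" "countable E"
    using countable_connected_graph[OF assms(1,2,3,5)] by auto
  have "p_cut_E E x \<le> p_cut_V V E x"
    unfolding p_cut_E_eq p_cut_V_eq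
    using INF_edge_cutsets_at_zero[OF \<open>countable E\<close>]
      INF_vertex_cutsets_eq_zero_if_edge_cutsets[OF assms(1) \<open>countable E\<close>]
    by (intro Sup_unit_interval_mono) auto
  moreover have "p_cut_V V E x \<le> p_cut_E E x" if "bounded_degree V E"
    unfolding p_cut_E_eq p_cut_V_eq
    using INF_vertex_cutsets_at_zero[OF assms(1) \<open>countable E\<close>]
      INF_edge_cutsets_eq_zero_if_vertex_cutsets[OF \<open>countable V\<close> \<open>countable E\<close> that]
    by (intro Sup_unit_interval_mono) auto
  ultimately show ?thesis by auto
qed

end
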